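(* Let $\mathcal{A}$ be a complex Banach algebra with unity and $a,b\in\mathcal{A}$ with $ab=0$. Then $a$ and $b$ are both g$\pi$-Hirano invertible if and only if $a+b$ is g$\pi$-Hirano invertible.
   Context: $\mathcal{A}^{qnil}$ denotes the set of quasinilpotent elements of $\mathcal{A}$ (spectrum equal to $\{0\}$). An element $a\in\mathcal{A}$ is g$\pi$-Hirano invertible if there exists $x\in\mathcal{A}$ with $xax=x$, $ax=xa$ and $a-a^{n+2}x\in\mathcal{A}^{qnil}$ for some positive integer $n$. *)

theory Defs
  imports "HOL-Analysis.Analysis"
begin

class complex_banach_algebra_1 = real_normed_algebra_1 + banach +
  fixes scaleC :: "complex \<Rightarrow> 'a \<Rightarrow> 'a"
  assumes scaleC_add_right: "scaleC c (x + y) = scaleC c x + scaleC c y"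
    and scaleC_add_left: "scaleC (c + d) x = scaleC c x + scaleC d x"
    and scaleC_scaleC: "scaleC c (scaleC d x) = scaleC (c * d) x"
    and scaleC_one: "scaleC 1 x = x"
    and scaleC_of_real: "scaleC (complex_of_real r) x = scaleR r x"
    and mult_scaleC_left: "scaleC c x * y = scaleC c (x * y)"
    and mult_scaleC_right: "x * scaleC c y = scaleC c (x * y)"
    and norm_scaleC: "norm (scaleC c x) = cmod c * norm x"

definition invertible_el :: "'a::ring_1 \<Rightarrow> bool" where
  "invertible_el x \<longleftrightarrow> (\<exists>y. x * y = 1 \<and> y * x = 1)"

definition spectrum :: "'a::complex_banach_algebra_1 \<Rightarrow> complex set" where
  "spectrum a = {z. \<not> invertible_el (scaleC z 1 - a)}"

definition quasinilpotent :: "'a::complex_banach_algebra_1 \<Rightarrow> bool" where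
  "quasinilpotent a \<longleftrightarrow> spectrum a = {0}"

definition gpi_Hirano_invertible :: "'a::complex_banach_algebra_1 \<Rightarrow> bool" where
  "gpi_Hirano_invertible a \<longleftrightarrow>
     (\<exists>x. x * a * x = x \<and> a * x = x * a \<and>
          (\<exists>n::nat. n > 0 \<and> quasinilpotent (a - a ^ (n + 2) * x)))"

end

(*
  Everything is read off the spectrum.  An element a is g\<pi>-Hirano invertible iff its spectrum
  lies in {0} together with the n-th roots of unity, for some n > 0.  Given the inverse x, the
  idempotent p = a x splits a into a quasinilpotent part on the kernel of p and, on the range of
  p, an element whose difference with its (n + 1)-st power is quasinilpotent.  Conversely, by
  spectral mapping a ^ n - a ^ (2 n) is quasinilpotent, and the power series of
  (1 - 4 t) powr (-1/2) lifts a ^ n to an idempotent p with a ^ n - p quasinilpotent, from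
  which the inverse is built.

  If a b = 0 then (t - a) (t - b) = t (t - (a + b)), so away from 0 the spectrum of a + b lies
  in the union of the spectra of a and b.  Conversely, off a finite set containing 0 and the
  spectrum of a + b, the same identity makes t - a right invertible and t - b left invertible,
  continuously in t, and connectedness of the complement upgrades both to invertibility.

  Quasinilpotence is used in its norm form, norm (e ^ m) <= r ^ m eventually for every r > 0.
  That the spectrum {0} forces this is shown without complex analysis, by averaging resolvents
  over the roots of unity.
*)

theory Submission
  imports Defs "HOL-Computational_Algebra.Formal_Power_Series"
begin

section \<open>Invertible elements\<close>

context complex_banach_algebra_1
begin

lemma scaleC_zero_left [simp]: "scaleC 0 x = 0"
  using scaleC_add_left[of 0 0 x] by simp

lemma scaleC_zero_right [simp]: "scaleC c 0 = 0"
  using scaleC_add_right[of c 0 0] by simp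

lemma scaleC_minus_left: "scaleC (- c) x = - scaleC c x"
  using scaleC_add_left[of "- c" c x] by (simp add: eq_neg_iff_add_eq_0)

lemma scaleC_minus_right: "scaleC c (- x) = - scaleC c x"
  using scaleC_add_right[of c "- x" x] by (simp add: eq_neg_iff_add_eq_0)

lemma scaleC_diff_left: "scaleC (c - d) x = scaleC c x - scaleC d x"
  using scaleC_add_left[of c "- d" x] by (simp add: scaleC_minus_left)

lemma scaleC_diff_right: "scaleC c (x - y) = scaleC c x - scaleC c y"
  using scaleC_add_right[of c x "- y"] by (simp add: scaleC_minus_right)

lemma scaleC_sum_left: "scaleC (sum f S) x = (\<Sum>i\<in>S. scaleC (f i) x)"
  by (induction S rule: infinite_finite_induct) (auto simp: scaleC_add_left)

lemma scaleC_power: "(scaleC c x) ^ n = scaleC (c ^ n) (x ^ n)"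
  by (induction n)
    (auto simp: scaleC_one mult_scaleC_left mult_scaleC_right scaleC_scaleC mult.commute)

lemma scaleC_one_mult [simp]: "scaleC c 1 * x = scaleC c x" "x * scaleC c 1 = scaleC c x"
  by (simp_all add: mult_scaleC_left mult_scaleC_right)

lemma scaleC_cancel: "c \<noteq> 0 \<Longrightarrow> scaleC (inverse c) (scaleC c x) = x"
  by (simp add: scaleC_scaleC scaleC_one)

lemma scaleC_one_diff_eq: "c \<noteq> 0 \<Longrightarrow> scaleC c 1 - x = scaleC c (1 - scaleC (inverse c) x)"
  by (simp add: scaleC_diff_right scaleC_scaleC scaleC_one)

end

lemma bounded_linear_scaleC_left:
  "bounded_linear (\<lambda>c. scaleC c (x::'a::complex_banach_algebra_1))"
proof (rule bounded_linear_intro[where K = "norm x"])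
  fix c d :: complex and r :: real
  show "scaleC (c + d) x = scaleC c x + scaleC d x" by (rule scaleC_add_left)
  show "scaleC (r *\<^sub>R c) x = r *\<^sub>R scaleC c x"
    by (simp add: scaleR_conv_of_real scaleC_scaleC[symmetric] scaleC_of_real)
  show "norm (scaleC c x) \<le> norm c * norm x" by (simp add: norm_scaleC)
qed

lemma continuous_on_scaleC_left [continuous_intros]:
  "continuous_on S f \<Longrightarrow> continuous_on S (\<lambda>t. scaleC (f t) (x::'a::complex_banach_algebra_1))"
  using bounded_linear.continuous_on[OF bounded_linear_scaleC_left] .

definition inverse_el :: "'a::ring_1 \<Rightarrow> 'a" where
  "inverse_el x = (SOME y. x * y = 1 \<and> y * x = 1)"

lemma invertible_elI: "x * y = 1 \<Longrightarrow> y * x = 1 \<Longrightarrow> invertible_el x"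
  unfolding invertible_el_def by blast

lemma
  assumes "invertible_el x"
  shows right_inverse_el [simp]: "x * inverse_el x = 1"
    and left_inverse_el [simp]: "inverse_el x * x = 1"
  using someI_ex[OF assms[unfolded invertible_el_def]] unfolding inverse_el_def by auto

lemma inverse_el_eq_right:
  assumes "invertible_el x" "x * y = 1"
  shows "inverse_el x = y"
  by (metis assms left_inverse_el mult.assoc mult_1_left mult_1_right)

lemma inverse_el_eq_left:
  assumes "invertible_el x" "y * x = 1"
  shows "inverse_el x = y"
  by (metis assms right_inverse_el mult.assoc mult_1_left mult_1_right)

lemma invertible_el_one [simp]: "invertible_el (1::'a::ring_1)"
  by (rule invertible_elI[of 1 1]) simp_all

lemma invertible_el_mult:
  fixes x y :: "'a::ring_1"
  assumes "invertible_el x" "invertible_el y"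
  shows "invertible_el (x * y)"
proof (rule invertible_elI)
  show "x * y * (inverse_el y * inverse_el x) = 1"
    by (simp add: assms mult.assoc flip: mult.assoc[of y])
  show "inverse_el y * inverse_el x * (x * y) = 1"
    by (simp add: assms mult.assoc flip: mult.assoc[of "inverse_el x"])
qed

lemma invertible_el_power: "invertible_el (x::'a::ring_1) \<Longrightarrow> invertible_el (x ^ n)"
  by (induction n) (simp_all add: invertible_el_mult)

lemma invertible_el_minus_iff [simp]: "invertible_el (- x) \<longleftrightarrow> invertible_el (x::'a::ring_1)"
  unfolding invertible_el_def by (metis minus_mult_minus minus_minus)

lemma commute_inverse_el:
  fixes x w :: "'a::ring_1"
  assumes "invertible_el w" "x * w = w * x"
  shows "x * inverse_el w = inverse_el w * x"
proof -
  have "x * inverse_el w = inverse_el w * (w * x) * inverse_el w"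
    by (simp add: assms(1) flip: mult.assoc)
  also have "\<dots> = inverse_el w * x"
    by (simp add: assms mult.assoc flip: assms(2))
  finally show ?thesis .
qed

lemma invertible_el_commuting_factors:
  fixes x y :: "'a::ring_1"
  assumes xy: "x * y = y * x" and inv: "invertible_el (x * y)"
  shows "invertible_el x" "invertible_el y"
proof -
  let ?v = "inverse_el (x * y)"
  have "x * (x * y) = (x * y) * x" "y * (x * y) = (x * y) * y"
    using xy by (metis mult.assoc)+
  then have "x * ?v = ?v * x" "y * ?v = ?v * y"
    using commute_inverse_el[OF inv] by blast+
  then have "x * (y * ?v) = 1" "(y * ?v) * x = 1" "y * (x * ?v) = 1" "(x * ?v) * y = 1"
    using inv xy by (simp_all add: mult.assoc) (metis mult.assoc right_inverse_el)+
  then show "invertible_el x" "invertible_el y" by (auto intro: invertible_elI)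
qed

lemma one_diff_mult_sum_powers:
  fixes z :: "'a::ring_1"
  shows "(1 - z) * (\<Sum>l<n. z ^ l) = 1 - z ^ n" "(\<Sum>l<n. z ^ l) * (1 - z) = 1 - z ^ n"
proof -
  show *: "(1 - z) * (\<Sum>l<n. z ^ l) = 1 - z ^ n"
  proof (induction n)
    case (Suc n)
    have "(1 - z) * (\<Sum>l<Suc n. z ^ l) = (1 - z) * (\<Sum>l<n. z ^ l) + (1 - z) * z ^ n"
      by (simp add: distrib_left)
    also have "\<dots> = 1 - z ^ Suc n"
      using Suc by (simp add: algebra_simps)
    finally show ?case .
  qed simp
  have "z * (\<Sum>l<n. z ^ l) = (\<Sum>l<n. z ^ l) * z"
    by (simp add: sum_distrib_left sum_distrib_right power_commutes)
  with * show "(\<Sum>l<n. z ^ l) * (1 - z) = 1 - z ^ n"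
    by (simp add: algebra_simps)
qed

lemma invertible_el_one_diff_of_power:
  fixes z :: "'a::ring_1"
  assumes "invertible_el (1 - z ^ n)"
  shows "invertible_el (1 - z)"
proof (rule invertible_el_commuting_factors(1))
  show "(1 - z) * (\<Sum>l<n. z ^ l) = (\<Sum>l<n. z ^ l) * (1 - z)"
    by (simp only: one_diff_mult_sum_powers)
  show "invertible_el ((1 - z) * (\<Sum>l<n. z ^ l))"
    using assms by (simp only: one_diff_mult_sum_powers)
qed

lemma invertible_el_scaleC_iff:
  fixes x :: "'a::complex_banach_algebra_1"
  assumes "c \<noteq> 0"
  shows "invertible_el (scaleC c x) \<longleftrightarrow> invertible_el x"
proof -
  have *: "invertible_el (scaleC c x)" if "c \<noteq> 0" "invertible_el x" for c x
    using that by (intro invertible_elI[of _ "scaleC (inverse c) (inverse_el x)"])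
      (simp_all add: mult_scaleC_left mult_scaleC_right scaleC_scaleC scaleC_one)
  show ?thesis
    using *[OF assms] *[of "inverse c" "scaleC c x"] assms by (auto simp: scaleC_cancel)
qed

lemma geometric_series_inverse:
  fixes w :: "'a::{real_normed_algebra_1,banach}"
  assumes "summable (\<lambda>k. w ^ k)"
  shows "(\<Sum>k. w ^ k) * (1 - w) = 1" "(1 - w) * (\<Sum>k. w ^ k) = 1"
proof -
  have tail: "(\<Sum>k. w ^ Suc k) = (\<Sum>k. w ^ k) - 1"
    using suminf_split_head[OF assms] by simp
  have "(\<Sum>k. w ^ k) * w = (\<Sum>k. w ^ Suc k)"
    using suminf_mult2[OF assms, of w] by (simp add: power_commutes)
  with tail show "(\<Sum>k. w ^ k) * (1 - w) = 1" by (simp add: algebra_simps)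
  have "w * (\<Sum>k. w ^ k) = (\<Sum>k. w ^ Suc k)"
    using suminf_mult[OF assms, of w] by simp
  with tail show "(1 - w) * (\<Sum>k. w ^ k) = 1" by (simp add: algebra_simps)
qed

lemma
  fixes u :: "'a::{real_normed_algebra_1,banach}"
  assumes u: "norm u < 1"
  shows invertible_el_one_diff_small: "invertible_el (1 - u)"
    and norm_inverse_el_one_diff_small: "norm (inverse_el (1 - u) - 1) \<le> norm u / (1 - norm u)"
proof -
  have geometric: "summable (\<lambda>k. norm u ^ k)"
    using u by (simp add: summable_geometric)
  have norm_summable: "summable (\<lambda>k. norm (u ^ k))"
    by (rule summable_comparison_test[OF _ geometric]) (auto intro: norm_power_ineq)
  note S = geometric_series_inverse[OF summable_norm_cancel[OF norm_summable]]
  show inv: "invertible_el (1 - u)"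
    using S by (rule invertible_elI[rotated])
  have norm_summable_Suc: "summable (\<lambda>k. norm (u ^ Suc k))"
    using summable_ignore_initial_segment[OF norm_summable, of 1] by simp
  have "norm (inverse_el (1 - u) - 1) = norm (\<Sum>k. u ^ Suc k)"
    using suminf_split_head[OF summable_norm_cancel[OF norm_summable]]
    by (simp add: inverse_el_eq_right[OF inv S(2)])
  also have "\<dots> \<le> (\<Sum>k. norm (u ^ Suc k))"
    by (rule summable_norm[OF norm_summable_Suc])
  also have "\<dots> \<le> (\<Sum>k. norm u ^ Suc k)"
    using norm_summable_Suc summable_ignore_initial_segment[OF geometric, of 1]
    by (intro suminf_le norm_power_ineq) simp_all
  also have "\<dots> = norm u / (1 - norm u)"
    using sums_mult[OF geometric_sums[of "norm u"], of "norm u"] u by (simp add: sums_iff)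
  finally show "norm (inverse_el (1 - u) - 1) \<le> norm u / (1 - norm u)" .
qed

lemma
  fixes x h :: "'a::{real_normed_algebra_1,banach}"
  assumes x: "invertible_el x" and small: "norm (inverse_el x) * norm h < 1"
  shows invertible_el_add_small: "invertible_el (x + h)"
    and norm_inverse_el_add_small: "norm (inverse_el (x + h) - inverse_el x)
      \<le> norm (inverse_el x) * (norm (inverse_el x) * norm h / (1 - norm (inverse_el x) * norm h))"
proof -
  let ?y = "inverse_el x" and ?u = "- (inverse_el x * h)"
  have nu: "norm ?u \<le> norm ?y * norm h"
    by (simp add: norm_mult_ineq)
  with small have u: "norm ?u < 1" by simp
  note inv_u = invertible_el_one_diff_small[OF u]
  let ?B = "inverse_el (1 - ?u)"
  have factor: "x + h = x * (1 - ?u)"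
    using x by (simp add: algebra_simps flip: mult.assoc)
  have "(x + h) * (?B * ?y) = 1"
    unfolding factor by (metis inv_u x mult.assoc mult_1_left right_inverse_el)
  moreover have "(?B * ?y) * (x + h) = 1"
    unfolding factor by (metis inv_u x mult.assoc mult_1_left left_inverse_el)
  ultimately show inv: "invertible_el (x + h)"
    using invertible_elI by blast
  from inv \<open>(x + h) * (?B * ?y) = 1\<close> have inverse: "inverse_el (x + h) = ?B * ?y"
    by (rule inverse_el_eq_right)
  from inverse have "norm (inverse_el (x + h) - ?y) = norm ((?B - 1) * ?y)"
    by (simp add: algebra_simps)
  also have "\<dots> \<le> norm (?B - 1) * norm ?y"
    by (rule norm_mult_ineq)
  also have "\<dots> \<le> (norm ?u / (1 - norm ?u)) * norm ?y"
    by (rule mult_right_mono[OF norm_inverse_el_one_diff_small[OF u] norm_ge_zero])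
  also have "norm ?u / (1 - norm ?u) \<le> (norm ?y * norm h) / (1 - norm ?y * norm h)"
    using nu u small by (intro frac_le) auto
  finally show "norm (inverse_el (x + h) - ?y) \<le> norm ?y * (norm ?y * norm h / (1 - norm ?y * norm h))"
    by (simp add: mult_right_mono mult.commute)
qed

lemma isCont_inverse_el:
  fixes x :: "'a::{real_normed_algebra_1,banach}"
  assumes x: "invertible_el x"
  shows "isCont inverse_el x"
proof -
  let ?n = "norm (inverse_el x)"
  have "((\<lambda>h. ?n * norm h) \<longlongrightarrow> 0) (at (0::'a))"
    by (intro tendsto_mult_right_zero tendsto_norm_zero tendsto_ident_at)
  then have "eventually (\<lambda>h. ?n * norm h < 1) (at (0::'a))"
    by (rule order_tendstoD) simp
  then have "eventually (\<lambda>h. norm (inverse_el (x + h) - inverse_el x)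
      \<le> ?n * (?n * norm h / (1 - ?n * norm h))) (at 0)"
    by eventually_elim (rule norm_inverse_el_add_small[OF x])
  moreover have "((\<lambda>h. ?n * (?n * norm h / (1 - ?n * norm h))) \<longlongrightarrow> 0) (at (0::'a))"
    by (auto intro!: tendsto_eq_intros)
  ultimately have "((\<lambda>h. inverse_el (x + h) - inverse_el x) \<longlongrightarrow> 0) (at 0)"
    by (rule Lim_null_comparison)
  then show ?thesis
    unfolding isCont_iff by (rule LIM_zero_cancel)
qed

lemma continuous_on_inverse_el [continuous_intros]:
  fixes f :: "'b::topological_space \<Rightarrow> 'a::{real_normed_algebra_1,banach}"
  assumes "continuous_on S f" "\<And>s. s \<in> S \<Longrightarrow> invertible_el (f s)"
  shows "continuous_on S (\<lambda>s. inverse_el (f s))"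
  using continuous_on_compose[OF assms(1) continuous_at_imp_continuous_on, of inverse_el]
    assms(2) isCont_inverse_el by (auto simp: o_def)

lemma open_invertible_el: "open {x::'a::{real_normed_algebra_1,banach}. invertible_el x}"
  unfolding open_contains_ball
proof (intro ballI)
  fix x :: 'a assume "x \<in> {x. invertible_el x}"
  then have x: "invertible_el x" by simp
  define d where "d = 1 / (norm (inverse_el x) + 1)"
  have "d > 0" unfolding d_def by (simp add: add_nonneg_pos)
  moreover have "ball x d \<subseteq> {x. invertible_el x}"
  proof
    fix y assume "y \<in> ball x d"
    then have "norm (inverse_el x) * norm (y - x) \<le> norm (inverse_el x) * d"
      by (simp add: dist_norm norm_minus_commute mult_left_mono)
    also have "\<dots> < 1"
      unfolding d_def using add_nonneg_pos[OF norm_ge_zero zero_less_one, of "inverse_el x"]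
      by (simp add: divide_less_eq_1)
    finally have "norm (inverse_el x) * norm (y - x) < 1" .
    then show "y \<in> {x. invertible_el x}"
      using invertible_el_add_small[OF x] by force
  qed
  ultimately show "\<exists>e>0. ball x e \<subseteq> {x. invertible_el x}"
    by blast
qed

section \<open>The spectrum\<close>

lemma zero_in_spectrum_iff: "0 \<in> spectrum a \<longleftrightarrow> \<not> invertible_el a"
  by (simp add: spectrum_def)

lemma notin_spectrum_iff:
  assumes "c \<noteq> 0"
  shows "c \<notin> spectrum a \<longleftrightarrow> invertible_el (1 - scaleC (inverse c) a)"
  using assms by (simp add: spectrum_def scaleC_one_diff_eq invertible_el_scaleC_iff)

lemma spectrum_norm_le:
  assumes "c \<in> spectrum a"
  shows "cmod c \<le> norm a"
proof (rule ccontr)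
  assume "\<not> cmod c \<le> norm a"
  then have "c \<noteq> 0" "norm a / cmod c < 1"
    by (auto simp: divide_less_eq_1)
  then have "c \<noteq> 0" "norm (scaleC (inverse c) a) < 1"
    by (simp_all add: norm_scaleC norm_inverse divide_inverse_commute)
  then show False
    using assms notin_spectrum_iff invertible_el_one_diff_small by blast
qed

lemma bounded_spectrum: "bounded (spectrum a)"
  unfolding bounded_iff using spectrum_norm_le by blast

lemma continuous_on_resolvent [continuous_intros]:
  assumes "S \<inter> spectrum a = {}"
  shows "continuous_on S (\<lambda>t. inverse_el (scaleC t 1 - a))"
  using assms by (auto simp: spectrum_def intro!: continuous_intros)

text \<open>A continuous family of one-sided invertible elements on a connected set is either
  everywhere or nowhere invertible: the invertible ones form an open set, and on it the
  one-sided inverse is the inverse, which makes the set also closed.\<close>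

lemma connected_one_sided_invertible_el:
  fixes f g :: "'b::topological_space \<Rightarrow> 'a::{real_normed_algebra_1,banach}"
  assumes "connected \<Omega>" "continuous_on \<Omega> f" "continuous_on \<Omega> g"
    and one_sided: "\<And>t. t \<in> \<Omega> \<Longrightarrow> f t * g t = 1 \<or> g t * f t = 1"
    and "t0 \<in> \<Omega>" "invertible_el (f t0)" "t \<in> \<Omega>"
  shows "invertible_el (f t)"
proof -
  define U where "U = {t \<in> \<Omega>. (f t * g t, g t * f t) = (1, 1)}"
  have U_eq: "U = \<Omega> \<inter> f -` {x. invertible_el x}"
    using one_sided by (auto simp: U_def intro: invertible_elI)
      (metis inverse_el_eq_right inverse_el_eq_left left_inverse_el right_inverse_el)+
  then have "openin (top_of_set \<Omega>) U"
    using continuous_openin_preimage_gen[OF assms(2) open_invertible_el] by simp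
  moreover have "closedin (top_of_set \<Omega>) U"
    unfolding U_def using assms(2,3)
    by (intro continuous_closedin_preimage_constant continuous_intros)
  moreover have "t0 \<in> U"
    using U_eq assms(5,6) by blast
  ultimately have "U = \<Omega>"
    using \<open>connected \<Omega>\<close> unfolding connected_clopen by blast
  with U_eq \<open>t \<in> \<Omega>\<close> show ?thesis by blast
qed

definition primitive_root_unity :: "nat \<Rightarrow> complex" where
  "primitive_root_unity m = exp (2 * of_real pi * \<i> / of_nat m)"

lemma primitive_root_unity_power: "primitive_root_unity m ^ j = exp (2 * of_real pi * \<i> * of_nat j / of_nat m)"
  unfolding primitive_root_unity_def exp_of_nat_mult[symmetric] by (simp add: field_simps)

lemma primitive_root_unity_power_eq_1_iff: "m > 0 \<Longrightarrow> primitive_root_unity m ^ j = 1 \<longleftrightarrow> m dvd j"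
  unfolding primitive_root_unity_power by (simp add: complex_root_unity_eq_1)

lemma norm_primitive_root_unity_power [simp]: "cmod (primitive_root_unity m ^ j) = 1"
  by (simp add: primitive_root_unity_def norm_power norm_exp_eq_Re)

lemma primitive_root_unity_power_power_self: "m > 0 \<Longrightarrow> (primitive_root_unity m ^ j) ^ m = 1"
  by (simp add: primitive_root_unity_power_eq_1_iff flip: power_mult)

lemma sum_primitive_root_unity_powers:
  assumes "m > 0"
  shows "(\<Sum>j<m. (primitive_root_unity m ^ j) ^ l) = (if m dvd l then of_nat m else 0)"
proof (cases "m dvd l")
  case True
  then have "(primitive_root_unity m ^ j) ^ l = 1" for j
    using assms by (simp add: primitive_root_unity_power_eq_1_iff flip: power_mult)
  with True show ?thesis by simp
next
  case False
  then have "primitive_root_unity m ^ l \<noteq> 1"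
    using assms primitive_root_unity_power_eq_1_iff by blast
  then have "(\<Sum>j<m. (primitive_root_unity m ^ l) ^ j) = 0"
    using assms by (simp add: geometric_sum primitive_root_unity_power_power_self)
  with False show ?thesis
    by (simp add: mult.commute flip: power_mult)
qed

lemma
  fixes x :: "'a::complex_banach_algebra_1"
  assumes m: "m > 0" and inv: "\<And>j. j < m \<Longrightarrow> invertible_el (1 - scaleC (primitive_root_unity m ^ j) x)"
  shows invertible_el_one_diff_power: "invertible_el (1 - x ^ m)"
    and inverse_el_one_diff_power: "inverse_el (1 - x ^ m)
      = scaleC (1 / of_nat m) (\<Sum>j<m. inverse_el (1 - scaleC (primitive_root_unity m ^ j) x))"
proof -
  define z where "z j = scaleC (primitive_root_unity m ^ j) x" for j
  define S where "S j = (\<Sum>l<m. z j ^ l)" for j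
  have "z j ^ m = x ^ m" for j
    using m by (simp add: z_def scaleC_power primitive_root_unity_power_power_self scaleC_one)
  then have S: "(1 - z j) * S j = 1 - x ^ m" "S j * (1 - z j) = 1 - x ^ m" for j
    unfolding S_def using one_diff_mult_sum_powers by metis+
  have inverse: "inverse_el (1 - z j) * (1 - x ^ m) = S j" "(1 - x ^ m) * inverse_el (1 - z j) = S j"
    if "j < m" for j
    using inv[OF that] unfolding z_def[symmetric]
    by (metis S(1) left_inverse_el mult.assoc mult_1_left,
        metis S(2) right_inverse_el mult.assoc mult_1_right)
  have "(\<Sum>j<m. S j) = (\<Sum>l<m. scaleC (\<Sum>j<m. (primitive_root_unity m ^ j) ^ l) (x ^ l))"
    unfolding S_def z_def scaleC_power scaleC_sum_left by (rule sum.swap)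
  also have "\<dots> = (\<Sum>l<m. if l = 0 then scaleC (of_nat m) 1 else 0)"
    using m by (intro sum.cong) (auto simp: sum_primitive_root_unity_powers dvd_imp_le)
  finally have sum_S: "scaleC (1 / of_nat m) (\<Sum>j<m. S j) = 1"
    using m by (simp add: scaleC_scaleC scaleC_one)
  define Y where "Y = scaleC (1 / of_nat m) (\<Sum>j<m. inverse_el (1 - z j))"
  have Y: "(1 - x ^ m) * Y = 1" "Y * (1 - x ^ m) = 1"
    unfolding Y_def using inverse sum_S
    by (simp_all add: mult_scaleC_left mult_scaleC_right sum_distrib_left sum_distrib_right)
  then show inv_power: "invertible_el (1 - x ^ m)"
    by (rule invertible_elI)
  show "inverse_el (1 - x ^ m)
      = scaleC (1 / of_nat m) (\<Sum>j<m. inverse_el (1 - scaleC (primitive_root_unity m ^ j) x))"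
    using inverse_el_eq_right[OF inv_power Y(1)] by (simp add: Y_def z_def)
qed

lemma power_in_spectrum_power:
  fixes a :: "'a::complex_banach_algebra_1"
  assumes n: "n > 0" and c: "c \<in> spectrum a"
  shows "c ^ n \<in> spectrum (a ^ n)"
proof (cases "c = 0")
  case True
  have "a * a ^ (n - 1) = a ^ n"
    using n by (simp flip: power_Suc)
  moreover have "a * a ^ (n - 1) = a ^ (n - 1) * a"
    by (simp add: power_commutes)
  moreover have "\<not> invertible_el a"
    using c True by (simp add: zero_in_spectrum_iff)
  ultimately have "\<not> invertible_el (a ^ n)"
    using invertible_el_commuting_factors(1) by metis
  with True n show ?thesis
    by (simp add: zero_in_spectrum_iff zero_power)
next
  case False
  show ?thesis
  proof (rule ccontr)
    assume "c ^ n \<notin> spectrum (a ^ n)"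
    with False have "invertible_el (1 - (scaleC (inverse c) a) ^ n)"
      by (simp add: notin_spectrum_iff scaleC_power power_inverse)
    then have "invertible_el (1 - scaleC (inverse c) a)"
      by (rule invertible_el_one_diff_of_power)
    with c show False
      using notin_spectrum_iff[OF False] by blast
  qed
qed

lemma notin_spectrum_power:
  fixes a :: "'a::complex_banach_algebra_1"
  assumes n: "n > 0" and "\<mu> \<noteq> 0" and roots: "\<And>s. s ^ n = \<mu> \<Longrightarrow> s \<notin> spectrum a"
  shows "\<mu> \<notin> spectrum (a ^ n)"
proof -
  obtain \<zeta> where \<zeta>: "\<mu> = \<zeta> ^ n"
    using exists_complex_root n by blast
  with \<open>\<mu> \<noteq> 0\<close> n have "\<zeta> \<noteq> 0"
    by auto
  define x where "x = scaleC (inverse \<zeta>) a"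
  have "invertible_el (1 - scaleC (primitive_root_unity n ^ j) x)" for j
  proof -
    define s where "s = \<zeta> / primitive_root_unity n ^ j"
    have "s ^ n = \<mu>"
      using n by (simp add: s_def \<zeta> power_divide primitive_root_unity_power_power_self)
    then have "s \<notin> spectrum a" "s \<noteq> 0"
      using roots \<open>\<mu> \<noteq> 0\<close> n by (auto simp: zero_power)
    then have "invertible_el (1 - scaleC (inverse s) a)"
      by (simp add: notin_spectrum_iff)
    moreover have "inverse s = primitive_root_unity n ^ j * inverse \<zeta>"
      by (simp add: s_def divide_inverse)
    ultimately show ?thesis
      by (simp add: x_def scaleC_scaleC)
  qed
  then have "invertible_el (1 - x ^ n)"
    using invertible_el_one_diff_power[OF n] by blast
  moreover have "x ^ n = scaleC (inverse \<mu>) (a ^ n)"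
    by (simp add: x_def \<zeta> scaleC_power power_inverse)
  ultimately show ?thesis
    using \<open>\<mu> \<noteq> 0\<close> by (simp add: notin_spectrum_iff)
qed

lemma spectrum_power_subset:
  fixes a :: "'a::complex_banach_algebra_1"
  assumes n: "n > 0"
  shows "spectrum (a ^ n) \<subseteq> (\<lambda>c. c ^ n) ` spectrum a"
proof
  fix \<mu> assume \<mu>: "\<mu> \<in> spectrum (a ^ n)"
  show "\<mu> \<in> (\<lambda>c. c ^ n) ` spectrum a"
  proof (cases "\<mu> = 0")
    case True
    with \<mu> have "\<not> invertible_el a"
      using invertible_el_power by (auto simp: zero_in_spectrum_iff)
    with True n show ?thesis
      by (auto simp: zero_in_spectrum_iff zero_power intro: image_eqI[of _ _ 0])
  next
    case False
    with \<mu> show ?thesis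
      using notin_spectrum_power[OF n] by blast
  qed
qed

lemma spectrum_power:
  fixes a :: "'a::complex_banach_algebra_1"
  assumes "n > 0"
  shows "spectrum (a ^ n) = (\<lambda>c. c ^ n) ` spectrum a"
  using spectrum_power_subset power_in_spectrum_power assms by blast

lemma spectrum_diff_square_subset:
  fixes a :: "'a::complex_banach_algebra_1"
  shows "spectrum (a - a * a) \<subseteq> (\<lambda>c. c - c * c) ` spectrum a"
proof
  fix \<mu> assume \<mu>: "\<mu> \<in> spectrum (a - a * a)"
  show "\<mu> \<in> (\<lambda>c. c - c * c) ` spectrum a"
  proof (rule ccontr)
    assume not_image: "\<mu> \<notin> (\<lambda>c. c - c * c) ` spectrum a"
    obtain r where r: "r * r = 1 - 4 * \<mu>"
      using power2_csqrt[of "1 - 4 * \<mu>"] by (metis power2_eq_square)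
    define t where "t = (1 + r) / 2"
    have roots: "t * (1 - t) = \<mu>"
      unfolding t_def using r by (simp add: field_simps)
    have "\<mu> = t - t * t" "\<mu> = (1 - t) - (1 - t) * (1 - t)"
      using roots by (simp_all add: algebra_simps)
    then have "t \<notin> spectrum a" "1 - t \<notin> spectrum a"
      using not_image image_eqI[of \<mu> "\<lambda>c. c - c * c"] by blast+
    then have "invertible_el ((scaleC t 1 - a) * (scaleC (1 - t) 1 - a))"
      by (simp add: spectrum_def invertible_el_mult)
    also have "(scaleC t 1 - a) * (scaleC (1 - t) 1 - a)
        = scaleC (t * (1 - t)) 1 - (scaleC t a + scaleC (1 - t) a) + a * a"
      by (simp add: left_diff_distrib right_diff_distrib scaleC_diff_right scaleC_scaleC)
    also have "\<dots> = scaleC \<mu> 1 - (a - a * a)"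
      using roots by (simp add: scaleC_one flip: scaleC_add_left)
    finally show False
      using \<mu> by (simp add: spectrum_def)
  qed
qed

section \<open>Topologically nilpotent elements\<close>

definition topologically_nilpotent :: "'a::real_normed_algebra_1 \<Rightarrow> bool" where
  "topologically_nilpotent v \<longleftrightarrow> (\<forall>r>0. \<exists>m0. \<forall>m\<ge>m0. norm (v ^ m) \<le> r ^ m)"

lemma topologically_nilpotentD:
  assumes "topologically_nilpotent v" "r > 0"
  obtains m0 where "\<And>m. m \<ge> m0 \<Longrightarrow> norm (v ^ m) \<le> r ^ m"
  using assms unfolding topologically_nilpotent_def by blast

lemma power_mult_distrib_commuting:
  fixes x y :: "'a::monoid_mult"
  assumes "x * y = y * x"
  shows "(x * y) ^ n = x ^ n * y ^ n"
proof (induction n)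
  case (Suc n)
  have "(x * y) ^ Suc n = x * (y * x ^ n) * y ^ n"
    by (simp add: Suc mult.assoc)
  also have "\<dots> = x * (x ^ n * y) * y ^ n"
    by (simp only: power_commuting_commutes[OF assms])
  also have "\<dots> = x ^ Suc n * y ^ Suc n"
    by (simp add: mult.assoc)
  finally show ?case .
qed simp

lemma topologically_nilpotent_mult:
  fixes v k :: "'a::real_normed_algebra_1"
  assumes v: "topologically_nilpotent v" and vk: "v * k = k * v"
  shows "topologically_nilpotent (v * k)"
  unfolding topologically_nilpotent_def
proof (intro allI impI)
  fix r :: real assume r: "r > 0"
  have nk: "norm k + 1 > 0"
    by (simp add: add_nonneg_pos)
  obtain m0 where m0: "\<And>m. m \<ge> m0 \<Longrightarrow> norm (v ^ m) \<le> (r / (norm k + 1)) ^ m"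
    using topologically_nilpotentD[OF v] r nk by (metis divide_pos_pos)
  have "norm ((v * k) ^ m) \<le> r ^ m" if "m \<ge> m0" for m
  proof -
    have "norm ((v * k) ^ m) \<le> norm (v ^ m) * norm (k ^ m)"
      unfolding power_mult_distrib_commuting[OF vk] by (rule norm_mult_ineq)
    also have "\<dots> \<le> (r / (norm k + 1)) ^ m * norm k ^ m"
      using m0[OF that] r nk by (intro mult_mono norm_power_ineq) auto
    also have "\<dots> = (r * (norm k / (norm k + 1))) ^ m"
      by (simp add: power_mult_distrib power_divide)
    also have "\<dots> \<le> r ^ m"
      using r nk by (intro power_mono mult_right_le_one_le) (auto simp: divide_le_eq_1)
    finally show ?thesis .
  qed
  then show "\<exists>m0. \<forall>m\<ge>m0. norm ((v * k) ^ m) \<le> r ^ m" by blast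
qed

lemma topologically_nilpotent_not_invertible_el:
  fixes v :: "'a::real_normed_algebra_1"
  assumes v: "topologically_nilpotent v"
  shows "\<not> invertible_el v"
proof
  assume inv: "invertible_el v"
  then have "topologically_nilpotent (v * inverse_el v)"
    by (intro topologically_nilpotent_mult[OF v] commute_inverse_el) simp_all
  then have "topologically_nilpotent (1::'a)"
    using inv by simp
  then obtain m0 where "\<And>m. m \<ge> m0 \<Longrightarrow> norm ((1::'a) ^ m) \<le> (1/2) ^ m"
    using topologically_nilpotentD[of 1 "1/2"] by auto
  then have "1 \<le> (1/2::real) ^ Suc m0"
    by (metis norm_one power_one order_refl le_SucI)
  moreover have "(1/2::real) ^ Suc m0 < 1"
    by (rule power_Suc_less_one) simp_all
  ultimately show False
    by simp
qed

lemma spectrum_subset_0_iff: "spectrum e \<subseteq> {0} \<longleftrightarrow> (\<forall>c. invertible_el (1 - scaleC c e))"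
proof -
  have "spectrum e \<subseteq> {0} \<longleftrightarrow> (\<forall>c. c \<noteq> 0 \<longrightarrow> c \<notin> spectrum e)"
    by auto
  also have "\<dots> \<longleftrightarrow> (\<forall>c. c \<noteq> 0 \<longrightarrow> invertible_el (1 - scaleC c e))"
    by (metis inverse_inverse_eq inverse_nonzero_iff_nonzero notin_spectrum_iff)
  finally show ?thesis
    by (metis scaleC_zero_left diff_zero invertible_el_one)
qed

lemma invertible_el_one_diff_topologically_nilpotent:
  fixes w :: "'a::{real_normed_algebra_1,banach}"
  assumes "topologically_nilpotent w"
  shows "invertible_el (1 - w)"
proof -
  obtain m0 where m0: "\<And>m. m \<ge> m0 \<Longrightarrow> norm (w ^ m) \<le> (1/2) ^ m"
    using topologically_nilpotentD[OF assms, of "1/2"] by auto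
  have "norm (w ^ Suc m0) \<le> (1/2) ^ Suc m0"
    by (rule m0) simp
  also have "\<dots> < 1"
    by (rule power_Suc_less_one) simp_all
  finally have "invertible_el (1 - w ^ Suc m0)"
    by (rule invertible_el_one_diff_small)
  then show ?thesis
    by (rule invertible_el_one_diff_of_power)
qed

lemma topologically_nilpotent_spectrum:
  fixes v :: "'a::complex_banach_algebra_1"
  assumes v: "topologically_nilpotent v"
  shows "spectrum v = {0}"
proof -
  have "topologically_nilpotent (v * scaleC c 1)" for c
    by (rule topologically_nilpotent_mult[OF v]) simp
  then have "invertible_el (1 - scaleC c v)" for c
    using invertible_el_one_diff_topologically_nilpotent by fastforce
  then have "spectrum v \<subseteq> {0}"
    using spectrum_subset_0_iff by blast
  moreover have "0 \<in> spectrum v"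
    using topologically_nilpotent_not_invertible_el[OF v] zero_in_spectrum_iff by blast
  ultimately show ?thesis by blast
qed

text \<open>The resolvent identity \<open>g - g' = (1 - c) *\<^sub>R (g * u * g')\<close> recovers \<open>u\<close> from
  \<open>g - g'\<close>; if the resolvents are close, \<open>u\<close> must be small.\<close>

lemma norm_neq_1_if_resolvents_close:
  fixes u :: "'a::real_normed_algebra_1"
  assumes c: "0 \<le> c" "c \<le> 1/2"
    and inv: "invertible_el (1 - u)" "invertible_el (1 - c *\<^sub>R u)"
    and close: "norm (inverse_el (1 - u) - inverse_el (1 - c *\<^sub>R u)) \<le> 1/16"
  shows "norm u \<noteq> 1"
proof
  assume u: "norm u = 1"
  let ?v = "c *\<^sub>R u" and ?g = "inverse_el (1 - u)" and ?g' = "inverse_el (1 - c *\<^sub>R u)"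
  have "?g * (1 - ?v) * ?g' = ?g" "?g * (1 - u) * ?g' = ?g'"
    using inv by (simp_all add: mult.assoc)
  then have "?g - ?g' = ?g * (1 - ?v) * ?g' - ?g * (1 - u) * ?g'"
    by simp
  also have "\<dots> = ?g * ((1 - ?v) - (1 - u)) * ?g'"
    by (simp only: left_diff_distrib right_diff_distrib)
  also have "(1 - ?v) - (1 - u) = (1 - c) *\<^sub>R u"
    by (simp add: scaleR_diff_left)
  finally have "norm (?g - ?g') = (1 - c) * norm (?g * u * ?g')"
    using c by simp
  with close have "(1 - c) * norm (?g * u * ?g') \<le> 1/16"
    by simp
  moreover have "(1/2) * norm (?g * u * ?g') \<le> (1 - c) * norm (?g * u * ?g')"
    using c by (intro mult_right_mono) auto
  ultimately have small: "norm (?g * u * ?g') \<le> 1/8"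
    by linarith
  have "u = ((1 - u) * ?g) * u * (?g' * (1 - ?v))"
    using inv by simp
  then have "norm u = norm ((1 - u) * (?g * u * ?g') * (1 - ?v))"
    by (simp only: mult.assoc)
  also have "\<dots> \<le> norm (1 - u) * norm (?g * u * ?g') * norm (1 - ?v)"
    by (intro order.trans[OF norm_mult_ineq] mult_right_mono norm_mult_ineq norm_ge_zero)
  also have "\<dots> \<le> 2 * (1/8) * (3/2)"
  proof (intro mult_mono)
    show "norm (1 - u) \<le> 2"
      using norm_triangle_ineq4[of 1 u] u by simp
    show "norm (1 - ?v) \<le> 3/2"
      using norm_triangle_ineq4[of 1 ?v] u c by simp
  qed (use small in auto)
  finally show False
    using u by simp
qed

lemma uniformly_continuous_on_cball_radially_close:
  fixes f :: "complex \<Rightarrow> 'b::metric_space"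
  assumes f: "uniformly_continuous_on (cball 0 R) f" and "\<epsilon> > 0" "R \<ge> 0"
  obtains \<eta> where "0 < \<eta>" "\<eta> \<le> 1/2"
    "\<And>\<omega> \<rho>. cmod \<omega> = 1 \<Longrightarrow> 0 \<le> \<rho> \<Longrightarrow> \<rho> \<le> R \<Longrightarrow>
      dist (f (\<omega> * of_real \<rho>)) (f (\<omega> * of_real ((1 - \<eta>) * \<rho>))) < \<epsilon>"
proof -
  obtain \<delta> where \<delta>: "\<delta> > 0" and uc: "\<forall>c\<in>cball 0 R. \<forall>d\<in>cball 0 R.
      dist d c < \<delta> \<longrightarrow> dist (f d) (f c) < \<epsilon>"
    using f \<open>\<epsilon> > 0\<close> unfolding uniformly_continuous_on_def by blast
  define \<eta> where "\<eta> = min (1/2) (\<delta> / (R + 1))"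
  have "0 < \<eta>"
    using \<delta> \<open>R \<ge> 0\<close> by (simp add: \<eta>_def)
  moreover have "\<eta> \<le> 1/2"
    unfolding \<eta>_def by (rule min.cobounded1)
  ultimately have \<eta>: "0 < \<eta>" "\<eta> \<le> 1/2"
    by blast+
  have "R * \<eta> \<le> R * (\<delta> / (R + 1))"
    using \<open>R \<ge> 0\<close> by (intro mult_left_mono) (simp_all add: \<eta>_def)
  also have "\<dots> < \<delta>"
    using \<delta> \<open>R \<ge> 0\<close> by (simp add: field_simps)
  finally have "R * \<eta> < \<delta>" .
  have "dist (f (\<omega> * of_real \<rho>)) (f (\<omega> * of_real ((1 - \<eta>) * \<rho>))) < \<epsilon>"
    if \<omega>: "cmod \<omega> = 1" and \<rho>: "0 \<le> \<rho>" "\<rho> \<le> R" for \<omega> \<rho>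
  proof -
    let ?c = "\<omega> * of_real \<rho>" and ?d = "\<omega> * of_real ((1 - \<eta>) * \<rho>)"
    have "cmod ?c = \<rho>" "cmod ?d = (1 - \<eta>) * \<rho>"
      using \<rho> \<eta> \<omega> by (simp_all only: norm_mult norm_of_real mult_1_left) (simp_all add: abs_mult)
    moreover have "(1 - \<eta>) * \<rho> \<le> R"
      using \<rho> \<eta> mult_left_le_one_le[of \<rho> "1 - \<eta>"] by simp
    ultimately have "?c \<in> cball 0 R" "?d \<in> cball 0 R"
      using \<rho> by simp_all
    moreover have "?c - ?d = \<omega> * of_real (\<eta> * \<rho>)"
      by (simp add: algebra_simps)
    then have "dist ?c ?d = \<eta> * \<rho>"
      using \<rho> \<eta> \<omega> by (simp add: dist_norm norm_mult abs_mult)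
    moreover have "\<eta> * \<rho> \<le> R * \<eta>"
      using \<rho> \<eta> by (simp add: mult.commute mult_left_mono)
    ultimately show ?thesis
      using uc \<open>R * \<eta> < \<delta>\<close> by (simp add: dist_commute)
  qed
  with \<eta> show ?thesis
    using that by blast
qed

lemma resolvents_radially_close:
  fixes e :: "'a::complex_banach_algebra_1"
  assumes inv: "\<And>c. invertible_el (1 - scaleC c e)" and "R \<ge> 0"
  obtains \<eta> where "0 < \<eta>" "\<eta> \<le> 1/2"
    "\<And>\<omega> \<rho>. cmod \<omega> = 1 \<Longrightarrow> 0 \<le> \<rho> \<Longrightarrow> \<rho> \<le> R \<Longrightarrow>
      norm (inverse_el (1 - scaleC (\<omega> * of_real \<rho>) e)
        - inverse_el (1 - scaleC (\<omega> * of_real ((1 - \<eta>) * \<rho>)) e)) \<le> 1/16"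
proof -
  have "continuous_on UNIV (\<lambda>c. inverse_el (1 - scaleC c e))"
    by (intro continuous_on_inverse_el continuous_intros inv)
  then have "uniformly_continuous_on (cball 0 R) (\<lambda>c. inverse_el (1 - scaleC c e))"
    by (rule compact_uniformly_continuous[OF continuous_on_subset[OF _ subset_UNIV] compact_cball])
  moreover have "(0::real) < 1/16"
    by simp
  ultimately obtain \<eta> where \<eta>: "0 < \<eta>" "\<eta> \<le> 1/2" and close: "\<And>\<omega> \<rho>. cmod \<omega> = 1 \<Longrightarrow> 0 \<le> \<rho> \<Longrightarrow> \<rho> \<le> R \<Longrightarrow>
      dist (inverse_el (1 - scaleC (\<omega> * of_real \<rho>) e))
        (inverse_el (1 - scaleC (\<omega> * of_real ((1 - \<eta>) * \<rho>)) e)) < 1/16"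
    using uniformly_continuous_on_cball_radially_close[OF _ _ \<open>R \<ge> 0\<close>] by blast
  show ?thesis
  proof (rule that[OF \<eta>])
    fix \<omega> :: complex and \<rho> :: real
    assume "cmod \<omega> = 1" "0 \<le> \<rho>" "\<rho> \<le> R"
    from close[OF this] show "norm (inverse_el (1 - scaleC (\<omega> * of_real \<rho>) e)
        - inverse_el (1 - scaleC (\<omega> * of_real ((1 - \<eta>) * \<rho>)) e)) \<le> 1/16"
      by (simp add: dist_norm)
  qed
qed

lemma averaged_resolvents_close:
  fixes e :: "'a::complex_banach_algebra_1"
  assumes inv: "\<And>c. invertible_el (1 - scaleC c e)" and "R \<ge> 0"
  obtains \<eta> where "0 < \<eta>" "\<eta> \<le> 1/2"
    "\<And>m \<rho>. m > 0 \<Longrightarrow> 0 \<le> \<rho> \<Longrightarrow> \<rho> \<le> R \<Longrightarrow>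
      norm (inverse_el (1 - (scaleC (of_real \<rho>) e) ^ m)
        - inverse_el (1 - (scaleC (of_real ((1 - \<eta>) * \<rho>)) e) ^ m)) \<le> 1/16"
proof -
  define f where "f c = inverse_el (1 - scaleC c e)" for c
  obtain \<eta> where \<eta>: "0 < \<eta>" "\<eta> \<le> 1/2" and close: "\<And>\<omega> \<rho>. cmod \<omega> = 1 \<Longrightarrow> 0 \<le> \<rho> \<Longrightarrow> \<rho> \<le> R \<Longrightarrow>
      norm (f (\<omega> * of_real \<rho>) - f (\<omega> * of_real ((1 - \<eta>) * \<rho>))) \<le> 1/16"
    using resolvents_radially_close[OF inv \<open>R \<ge> 0\<close>] unfolding f_def by blast
  have average: "inverse_el (1 - (scaleC c e) ^ m) = scaleC (1 / of_nat m) (\<Sum>j<m. f (primitive_root_unity m ^ j * c))"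
    if "m > 0" for m c
    using inverse_el_one_diff_power[OF that, of "scaleC c e"] inv by (simp add: f_def scaleC_scaleC)
  show ?thesis
  proof (rule that[OF \<eta>])
    fix m :: nat and \<rho> :: real
    assume m: "m > 0" and \<rho>: "0 \<le> \<rho>" "\<rho> \<le> R"
    let ?c = "complex_of_real \<rho>" and ?d = "complex_of_real ((1 - \<eta>) * \<rho>)"
    have "norm (inverse_el (1 - (scaleC ?c e) ^ m) - inverse_el (1 - (scaleC ?d e) ^ m))
        = (1 / real m) * norm (\<Sum>j<m. f (primitive_root_unity m ^ j * ?c) - f (primitive_root_unity m ^ j * ?d))"
      unfolding average[OF m] by (simp add: norm_scaleC norm_divide sum_subtractf flip: scaleC_diff_right)
    also have "\<dots> \<le> (1 / real m) * (\<Sum>j<m. 1/16)"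
      using close[OF norm_primitive_root_unity_power \<rho>]
      by (intro mult_left_mono order.trans[OF norm_sum] sum_mono) auto
    also have "\<dots> = 1/16"
      using m by simp
    finally show "norm (inverse_el (1 - (scaleC ?c e) ^ m) - inverse_el (1 - (scaleC ?d e) ^ m)) \<le> 1/16" .
  qed
qed

lemma norm_power_scaleC_neq_1:
  fixes e :: "'a::complex_banach_algebra_1"
  assumes inv: "\<And>c. invertible_el (1 - scaleC c e)" and "R \<ge> 0"
  obtains M where "\<And>m \<rho>. m \<ge> M \<Longrightarrow> 0 \<le> \<rho> \<Longrightarrow> \<rho> \<le> R \<Longrightarrow> \<rho> ^ m * norm (e ^ m) \<noteq> 1"
proof -
  have inv_power: "invertible_el (1 - (scaleC c e) ^ m)" if "m > 0" for c m
    using invertible_el_one_diff_power[OF that, of "scaleC c e"] inv by (simp add: scaleC_scaleC)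
  obtain \<eta> where \<eta>: "0 < \<eta>" "\<eta> \<le> 1/2" and close: "\<And>m \<rho>. m > 0 \<Longrightarrow> 0 \<le> \<rho> \<Longrightarrow> \<rho> \<le> R \<Longrightarrow>
      norm (inverse_el (1 - (scaleC (of_real \<rho>) e) ^ m)
        - inverse_el (1 - (scaleC (of_real ((1 - \<eta>) * \<rho>)) e) ^ m)) \<le> 1/16"
    using averaged_resolvents_close[OF inv \<open>R \<ge> 0\<close>] by blast
  obtain m1 where m1: "(1 - \<eta>) ^ m1 < 1/2"
    using real_arch_pow_inv[of "1/2" "1 - \<eta>"] \<eta> by auto
  show ?thesis
  proof (rule that[of "max 1 m1"])
    fix m :: nat and \<rho> :: real
    assume "max 1 m1 \<le> m" and \<rho>: "0 \<le> \<rho>" "\<rho> \<le> R"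
    then have m: "m > 0" "m1 \<le> m"
      by auto
    have "(1 - \<eta>) ^ m \<le> (1 - \<eta>) ^ m1"
      using \<eta> m by (intro power_decreasing) auto
    with m1 have c: "0 \<le> (1 - \<eta>) ^ m" "(1 - \<eta>) ^ m \<le> 1/2"
      using \<eta> by (simp, linarith)
    define u where "u = (scaleC (of_real \<rho>) e) ^ m"
    have scaled: "(scaleC (of_real ((1 - \<eta>) * \<rho>)) e) ^ m = ((1 - \<eta>) ^ m) *\<^sub>R u"
      by (simp add: u_def scaleC_power scaleC_scaleC power_mult_distrib flip: scaleC_of_real)
    have "norm u \<noteq> 1"
    proof (rule norm_neq_1_if_resolvents_close[OF c])
      show "invertible_el (1 - u)" "invertible_el (1 - (1 - \<eta>) ^ m *\<^sub>R u)"
        unfolding scaled[symmetric] unfolding u_def using inv_power[OF m(1)] by blast+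
      show "norm (inverse_el (1 - u) - inverse_el (1 - (1 - \<eta>) ^ m *\<^sub>R u)) \<le> 1/16"
        unfolding scaled[symmetric] unfolding u_def by (rule close[OF m(1) \<rho>])
    qed
    then show "\<rho> ^ m * norm (e ^ m) \<noteq> 1"
      using \<rho> by (simp add: u_def scaleC_power norm_scaleC norm_power)
  qed
qed

text \<open>Gelfand's formula for spectral radius zero, without complex analysis: for large \<open>m\<close>,
  the continuous function \<open>\<rho> \<mapsto> \<rho> ^ m * norm (e ^ m)\<close> starts at \<open>0\<close> and never takes the
  value \<open>1\<close> on \<open>[0, 1 / r]\<close>.\<close>

lemma topologically_nilpotentI:
  fixes e :: "'a::complex_banach_algebra_1"
  assumes "spectrum e \<subseteq> {0}"
  shows "topologically_nilpotent e"
  unfolding topologically_nilpotent_def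
proof (intro allI impI)
  fix r :: real assume r: "r > 0"
  have inv: "invertible_el (1 - scaleC c e)" for c
    using assms spectrum_subset_0_iff by blast
  have R: "1 / r \<ge> 0"
    using r by simp
  obtain M where M: "\<And>m \<rho>. m \<ge> M \<Longrightarrow> 0 \<le> \<rho> \<Longrightarrow> \<rho> \<le> 1 / r \<Longrightarrow>
      \<rho> ^ m * norm (e ^ m) \<noteq> 1"
    using norm_power_scaleC_neq_1[OF inv R] by blast
  have "norm (e ^ m) \<le> r ^ m" if m: "m \<ge> max 1 M" for m
  proof -
    define \<phi> where "\<phi> \<rho> = \<rho> ^ m * norm (e ^ m)" for \<rho> :: real
    have "\<phi> 0 \<le> 1"
      using m by (simp add: \<phi>_def zero_power)
    moreover have "continuous_on {0..1 / r} \<phi>"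
      unfolding \<phi>_def by (intro continuous_intros)
    ultimately have "\<phi> (1 / r) \<le> 1"
      using IVT'[of \<phi> 0 1 "1 / r"] M[of m] m R unfolding \<phi>_def by (meson linear max.boundedE)
    then show "norm (e ^ m) \<le> r ^ m"
      using r by (simp add: \<phi>_def power_divide field_simps)
  qed
  then show "\<exists>m0. \<forall>m\<ge>m0. norm (e ^ m) \<le> r ^ m" by blast
qed

lemma quasinilpotent_iff_topologically_nilpotent:
  "quasinilpotent e \<longleftrightarrow> topologically_nilpotent e"
  using topologically_nilpotentI topologically_nilpotent_spectrum
  unfolding quasinilpotent_def by blast

lemma quasinilpotent_iff_spectrum_subset: "quasinilpotent e \<longleftrightarrow> spectrum e \<subseteq> {0}"
  using topologically_nilpotentI topologically_nilpotent_spectrum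
  unfolding quasinilpotent_def by blast

section \<open>Idempotent lifting\<close>

definition bicommutant :: "'a::ring_1 set \<Rightarrow> 'a set" where
  "bicommutant S = {y. \<forall>z. (\<forall>s\<in>S. z * s = s * z) \<longrightarrow> y * z = z * y}"

lemma bicommutant_base: "s \<in> S \<Longrightarrow> s \<in> bicommutant S"
  unfolding bicommutant_def by auto

lemma bicommutant_one [simp]: "1 \<in> bicommutant S"
  and bicommutant_zero [simp]: "0 \<in> bicommutant S"
  unfolding bicommutant_def by auto

lemma bicommutant_add [simp]: "y \<in> bicommutant S \<Longrightarrow> w \<in> bicommutant S \<Longrightarrow> y + w \<in> bicommutant S"
  unfolding bicommutant_def by (auto simp: distrib_left distrib_right)

lemma bicommutant_minus [simp]: "y \<in> bicommutant S \<Longrightarrow> - y \<in> bicommutant S"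
  unfolding bicommutant_def by auto

lemma bicommutant_diff [simp]: "y \<in> bicommutant S \<Longrightarrow> w \<in> bicommutant S \<Longrightarrow> y - w \<in> bicommutant S"
  unfolding bicommutant_def by (auto simp: left_diff_distrib right_diff_distrib)

lemma bicommutant_mult [simp]: "y \<in> bicommutant S \<Longrightarrow> w \<in> bicommutant S \<Longrightarrow> y * w \<in> bicommutant S"
  unfolding bicommutant_def by (simp add: mult.assoc) (metis mult.assoc)

lemma bicommutant_power [simp]: "y \<in> bicommutant S \<Longrightarrow> y ^ k \<in> bicommutant S"
  by (induction k) auto

lemma bicommutant_sum [simp]: "(\<And>i. f i \<in> bicommutant S) \<Longrightarrow> sum f I \<in> bicommutant S"
  by (induction I rule: infinite_finite_induct) auto

lemma bicommutant_inverse_el [simp]: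
  "invertible_el y \<Longrightarrow> y \<in> bicommutant S \<Longrightarrow> inverse_el y \<in> bicommutant S"
  unfolding bicommutant_def using commute_inverse_el by fastforce

lemma bicommutant_scaleC [simp]:
  fixes y :: "'a::complex_banach_algebra_1"
  shows "y \<in> bicommutant S \<Longrightarrow> scaleC c y \<in> bicommutant S"
  unfolding bicommutant_def by (auto simp: mult_scaleC_left mult_scaleC_right)

lemma bicommutant_scaleR [simp]:
  fixes y :: "'a::real_normed_algebra_1"
  shows "y \<in> bicommutant S \<Longrightarrow> r *\<^sub>R y \<in> bicommutant S"
  unfolding bicommutant_def by auto

lemma bicommutant_suminf:
  fixes f :: "nat \<Rightarrow> 'a::{real_normed_algebra_1,banach}"
  assumes "summable f" "\<And>i. f i \<in> bicommutant S"
  shows "suminf f \<in> bicommutant S"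
  unfolding bicommutant_def
proof (intro CollectI allI impI)
  fix z assume "\<forall>s\<in>S. z * s = s * z"
  then have "f i * z = z * f i" for i
    using assms(2)[of i] unfolding bicommutant_def by blast
  then show "suminf f * z = z * suminf f"
    using suminf_mult[OF assms(1), of z] suminf_mult2[OF assms(1), of z] by simp
qed

lemma bicommutant_commute:
  assumes "\<And>s t. s \<in> S \<Longrightarrow> t \<in> S \<Longrightarrow> s * t = t * s"
    and "y \<in> bicommutant S" "w \<in> bicommutant S"
  shows "y * w = w * y"
proof -
  have "\<forall>s\<in>S. w * s = s * w"
    using assms(1,3) bicommutant_base unfolding bicommutant_def by blast
  then show ?thesis
    using assms(2) unfolding bicommutant_def by blast
qed

lemma summable_norm_power_series_topologically_nilpotent:
  fixes e :: "'a::real_normed_algebra_1" and \<gamma> :: "nat \<Rightarrow> real"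
  assumes e: "topologically_nilpotent e" and B: "B > 0" and \<gamma>: "\<And>k. \<bar>\<gamma> k\<bar> \<le> C * B ^ k"
  shows "summable (\<lambda>k. norm (\<gamma> k *\<^sub>R e ^ k))"
proof -
  obtain m0 where m0: "\<And>m. m \<ge> m0 \<Longrightarrow> norm (e ^ m) \<le> (1 / (2 * B)) ^ m"
    using topologically_nilpotentD[OF e, of "1 / (2 * B)"] B by auto
  have C: "C \<ge> 0"
    using \<gamma>[of 0] by simp
  have "norm (norm (\<gamma> k *\<^sub>R e ^ k)) \<le> C * (1/2) ^ k" if "k \<ge> m0" for k
  proof -
    have "norm (norm (\<gamma> k *\<^sub>R e ^ k)) = \<bar>\<gamma> k\<bar> * norm (e ^ k)"
      by simp
    also have "\<dots> \<le> (C * B ^ k) * (1 / (2 * B)) ^ k"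
      using m0[OF that] \<gamma>[of k] C by (intro mult_mono) auto
    also have "\<dots> = C * (1/2) ^ k"
      using B by (simp add: power_divide power_mult_distrib)
    finally show ?thesis .
  qed
  moreover have "summable (\<lambda>k. C * (1/2::real) ^ k)"
    by (intro summable_mult summable_geometric) simp
  ultimately show ?thesis
    by (rule summable_comparison_test'[rotated]) (auto simp: eventually_at_top_linorder)
qed

lemma abs_gbinomial_minus_half_le_1: "\<bar>(-1/2::real) gchoose k\<bar> \<le> 1"
proof (induction k)
  case (Suc k)
  let ?a = "-1/2::real"
  have "?a * (?a gchoose k) = of_nat k * (?a gchoose k) + of_nat (Suc k) * (?a gchoose Suc k)"
    by (rule gbinomial_mult_1)
  then have "of_nat (Suc k) * (?a gchoose Suc k) = (?a - of_nat k) * (?a gchoose k)"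
    by (simp add: algebra_simps)
  from arg_cong[OF this, of abs]
  have "of_nat (Suc k) * \<bar>?a gchoose Suc k\<bar> = \<bar>?a - of_nat k\<bar> * \<bar>?a gchoose k\<bar>"
    by (simp add: abs_mult)
  also have "\<dots> \<le> of_nat (Suc k) * 1"
    using Suc by (intro mult_mono) auto
  finally show ?case
    by simp
qed simp

text \<open>The Taylor coefficients of \<open>(1 - 4 x) powr (-1/2)\<close>; squaring the series gives the
  geometric series of \<open>4 x\<close>.\<close>

definition inverse_sqrt_coeff :: "nat \<Rightarrow> real" where
  "inverse_sqrt_coeff k = ((-1/2) gchoose k) * (-4) ^ k"

lemma abs_inverse_sqrt_coeff_le: "\<bar>inverse_sqrt_coeff k\<bar> \<le> 4 ^ k"
  using abs_gbinomial_minus_half_le_1[of k]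
  by (simp add: inverse_sqrt_coeff_def abs_mult power_abs mult_left_le_one_le)

lemma inverse_sqrt_coeff_convolution:
  "(\<Sum>i\<le>k. inverse_sqrt_coeff i * inverse_sqrt_coeff (k - i)) = 4 ^ k"
proof -
  have "(\<Sum>i\<le>k. inverse_sqrt_coeff i * inverse_sqrt_coeff (k - i))
      = (-4) ^ k * (\<Sum>i\<le>k. ((-1/2::real) gchoose i) * ((-1/2) gchoose (k - i)))"
    unfolding sum_distrib_left
  proof (rule sum.cong)
    fix i assume "i \<in> {..k}"
    then have "(-4::real) ^ i * (-4) ^ (k - i) = (-4) ^ k"
      by (simp flip: power_add)
    then show "inverse_sqrt_coeff i * inverse_sqrt_coeff (k - i)
        = (-4) ^ k * (((-1/2::real) gchoose i) * ((-1/2) gchoose (k - i)))"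
      unfolding inverse_sqrt_coeff_def by (simp add: mult_ac flip: \<open>_ = (-4) ^ k\<close>)
  qed simp
  also have "(\<Sum>i\<le>k. ((-1/2::real) gchoose i) * ((-1/2) gchoose (k - i))) = (-1) gchoose k"
    using gbinomial_Vandermonde[of "-1/2::real" "-1/2" k] by (simp add: atMost_atLeast0)
  also have "((-1::real) gchoose k) = (-1) ^ k"
    using gbinomial_negated_upper[of "-1::real" k] by (simp add: binomial_gbinomial[symmetric])
  finally show ?thesis
    by (simp flip: power_mult_distrib)
qed

lemma summable_norm_inverse_sqrt_series:
  fixes e :: "'a::real_normed_algebra_1"
  assumes "topologically_nilpotent e"
  shows "summable (\<lambda>k. norm (inverse_sqrt_coeff k *\<^sub>R e ^ k))"
  using abs_inverse_sqrt_coeff_le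
  by (intro summable_norm_power_series_topologically_nilpotent[OF assms, where B = 4 and C = 1]) auto

lemma inverse_sqrt_series_square:
  fixes e :: "'a::{real_normed_algebra_1,banach}"
  assumes e: "topologically_nilpotent e"
  defines "h \<equiv> \<Sum>k. inverse_sqrt_coeff k *\<^sub>R e ^ k"
  shows "h * h * (1 - 4 *\<^sub>R e) = 1"
proof -
  define T where "T k = inverse_sqrt_coeff k *\<^sub>R e ^ k" for k
  have geometric: "summable (\<lambda>k. (4 *\<^sub>R e) ^ k)"
    using summable_norm_power_series_topologically_nilpotent[OF e, of 4 "\<lambda>k. 4 ^ k" 1]
    by (simp add: scaleR_power summable_norm_cancel)
  have "h * h = (\<Sum>k. \<Sum>i\<le>k. T i * T (k - i))"
    unfolding h_def T_def
    by (rule Cauchy_product[OF summable_norm_inverse_sqrt_series[OF e] summable_norm_inverse_sqrt_series[OF e]])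
  also have "\<dots> = (\<Sum>k. (4 *\<^sub>R e) ^ k)"
  proof (rule suminf_cong)
    fix k
    have "T i * T (k - i) = (inverse_sqrt_coeff i * inverse_sqrt_coeff (k - i)) *\<^sub>R e ^ k"
      if "i \<le> k" for i
      using that by (simp add: T_def flip: power_add)
    then show "(\<Sum>i\<le>k. T i * T (k - i)) = (4 *\<^sub>R e) ^ k"
      by (simp add: scaleR_power inverse_sqrt_coeff_convolution flip: scaleR_sum_left)
  qed
  finally show ?thesis
    using geometric_series_inverse(1)[OF geometric] by simp
qed

lemma inverse_sqrt_series:
  fixes e :: "'a::{real_normed_algebra_1,banach}"
  assumes e: "topologically_nilpotent e" "e \<in> bicommutant S"
  obtains h g where "h \<in> bicommutant S" "g \<in> bicommutant S"
    "h * h * (1 - 4 *\<^sub>R e) = 1" "h = 1 + e * g"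
proof -
  define T where "T k = inverse_sqrt_coeff k *\<^sub>R e ^ k" for k
  define U where "U k = inverse_sqrt_coeff (Suc k) *\<^sub>R e ^ k" for k
  have norm_T: "summable (\<lambda>k. norm (T k))"
    unfolding T_def by (rule summable_norm_inverse_sqrt_series[OF e(1)])
  have "\<bar>inverse_sqrt_coeff (Suc k)\<bar> \<le> 4 * 4 ^ k" for k
    using abs_inverse_sqrt_coeff_le[of "Suc k"] by simp
  then have norm_U: "summable (\<lambda>k. norm (U k))"
    unfolding U_def
    by (intro summable_norm_power_series_topologically_nilpotent[OF e(1), where B = 4 and C = 4]) auto
  define h where "h = suminf T"
  define g where "g = suminf U"
  have "h * h * (1 - 4 *\<^sub>R e) = 1"
    unfolding h_def T_def by (rule inverse_sqrt_series_square[OF e(1)])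
  moreover have "h = 1 + e * g"
  proof -
    have "T (Suc k) = e * U k" for k
      by (simp add: T_def U_def mult_scaleR_right)
    then have "(\<Sum>k. T (Suc k)) = e * g"
      using suminf_mult[OF summable_norm_cancel[OF norm_U], of e] by (simp add: g_def)
    moreover have "T 0 = 1"
      by (simp add: T_def inverse_sqrt_coeff_def)
    ultimately show ?thesis
      using suminf_split_head[OF summable_norm_cancel[OF norm_T]]
      by (simp add: h_def diff_eq_eq add.commute)
  qed
  moreover have "h \<in> bicommutant S" "g \<in> bicommutant S"
    unfolding h_def g_def T_def U_def using e(2)
    by (auto intro!: bicommutant_suminf summable_norm_cancel norm_T[unfolded T_def]
        norm_U[unfolded U_def])
  ultimately show ?thesis
    using that by blast
qed

text \<open>With \<open>V = 2 c - 1\<close> and \<open>h = (1 - 4 (c - c * c)) powr (-1/2) = (V * V) powr (-1/2)\<close>,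
  the element \<open>W = V * h\<close> is a square root of \<open>1\<close>, and \<open>(1 + W) / 2\<close> is the idempotent.\<close>

lemma idempotent_lifting:
  fixes c :: "'a::{real_normed_algebra_1,banach}"
  assumes S: "\<And>s t. s \<in> S \<Longrightarrow> t \<in> S \<Longrightarrow> s * t = t * s"
    and c: "c \<in> bicommutant S" and nil: "topologically_nilpotent (c - c * c)"
  obtains p where "p \<in> bicommutant S" "p * p = p" "topologically_nilpotent (c - p)"
proof -
  have commute: "y * w = w * y" if "y \<in> bicommutant S" "w \<in> bicommutant S" for y w
    using bicommutant_commute S that by blast
  define e where "e = c - c * c"
  have e: "e \<in> bicommutant S"
    using c by (simp add: e_def)
  obtain h g where h: "h \<in> bicommutant S" "g \<in> bicommutant S"
    and inverse_sqrt: "h * h * (1 - 4 *\<^sub>R e) = 1" and h_eq: "h = 1 + e * g"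
    using inverse_sqrt_series[OF nil[folded e_def] e] by blast
  define V where "V = 2 *\<^sub>R c - 1"
  have V: "V \<in> bicommutant S"
    using c by (simp add: V_def)
  have VV: "V * V = 1 - 4 *\<^sub>R e"
    unfolding V_def e_def using scaleR_add_left[of 2 2 c] by (simp add: algebra_simps scaleR_diff_right)
  define p where "p = (1/2) *\<^sub>R (1 + V * h)"
  have "V * h * (V * h) = h * h * (V * V)"
    using commute[OF h(1) V] by (simp add: mult.assoc) (metis mult.assoc)
  also have "\<dots> = 1"
    using commute[OF h(1) V] inverse_sqrt VV by (simp add: mult.assoc)
  finally have "(1 + V * h) * (1 + V * h) = 2 *\<^sub>R (1 + V * h)"
    by (simp add: algebra_simps scaleR_2)
  then have idempotent: "p * p = p"
    by (simp add: p_def)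
  have p: "p \<in> bicommutant S"
    using V h by (simp add: p_def)
  define k where "k = (-1/2) *\<^sub>R (V * g)"
  have "c - p = e * k"
  proof -
    have "c - p = (1/2) *\<^sub>R (V - V * h)"
      by (simp add: p_def V_def algebra_simps scaleR_diff_right)
    also have "V - V * h = - (V * (e * g))"
      by (simp add: h_eq algebra_simps)
    also have "V * (e * g) = e * (V * g)"
      using commute[OF V e] by (simp flip: mult.assoc)
    finally show ?thesis
      by (simp add: k_def)
  qed
  moreover have "k \<in> bicommutant S"
    using V h by (simp add: k_def)
  ultimately have "topologically_nilpotent (c - p)"
    using topologically_nilpotent_mult[OF nil[folded e_def] commute[OF e]] by simp
  with idempotent p show ?thesis
    using that by blast
qed

section \<open>g\<pi>-Hirano invertibility and the spectrum\<close>

lemma invertible_el_from_idempotent_pieces: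
  fixes x :: "'a::ring_1"
  assumes S: "\<And>s t. s \<in> S \<Longrightarrow> t \<in> S \<Longrightarrow> s * t = t * s"
    and mem: "x \<in> bicommutant S" "p \<in> bicommutant S" "y \<in> bicommutant S" "z \<in> bicommutant S"
      "g \<in> bicommutant S"
    and p: "p * p = p" and inv: "invertible_el y" "invertible_el z"
    and pieces: "x * (1 - p) = y * (1 - p)" "x * g * p = z * p"
  shows "invertible_el x"
proof -
  have commute: "y * w = w * y" if "y \<in> bicommutant S" "w \<in> bicommutant S" for y w
    using bicommutant_commute S that by blast
  define Y where "Y = (1 - p) * inverse_el y + g * p * inverse_el z"
  have "x * Y = x * (1 - p) * inverse_el y + x * g * p * inverse_el z"
    by (simp add: Y_def distrib_left mult.assoc)
  also have "\<dots> = (1 - p) * (y * inverse_el y) + p * (z * inverse_el z)"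
    unfolding pieces using commute[of y "1 - p"] commute[of z p] mem by (simp add: mult.assoc)
  also have "\<dots> = 1"
    using inv by simp
  finally have "x * Y = 1" .
  moreover have "Y \<in> bicommutant S"
    using mem inv by (simp add: Y_def)
  ultimately show ?thesis
    using commute[OF mem(1)] invertible_elI by metis
qed

lemma quasinilpotent_of_power:
  fixes q :: "'a::complex_banach_algebra_1"
  assumes "n > 0" "quasinilpotent (q ^ n)"
  shows "quasinilpotent q"
  using assms spectrum_power[of n q]
  by (auto simp: quasinilpotent_iff_spectrum_subset zero_power)

lemma resolvent_mult_sum_powers:
  fixes a :: "'a::complex_banach_algebra_1"
  assumes "c \<noteq> 0"
  shows "(scaleC c 1 - a) * scaleC (c ^ n) (\<Sum>l<Suc n. (scaleC (inverse c) a) ^ l)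
    = scaleC (c ^ Suc n) 1 - a ^ Suc n"
proof -
  let ?z = "scaleC (inverse c) a"
  have "(scaleC c 1 - a) * scaleC (c ^ n) (\<Sum>l<Suc n. ?z ^ l)
      = scaleC (c ^ Suc n) ((1 - ?z) * (\<Sum>l<Suc n. ?z ^ l))"
    using assms by (simp add: scaleC_one_diff_eq mult_scaleC_left mult_scaleC_right scaleC_scaleC
        mult.commute)
  also have "\<dots> = scaleC (c ^ Suc n) (1 - ?z ^ Suc n)"
    by (simp only: one_diff_mult_sum_powers)
  also have "\<dots> = scaleC (c ^ Suc n) 1 - a ^ Suc n"
    using assms by (simp add: scaleC_diff_right scaleC_power scaleC_scaleC scaleC_one
        power_inverse del: power_Suc)
  finally show ?thesis .
qed

text \<open>On the kernel of \<open>p\<close> the element \<open>a\<close> agrees with the quasinilpotent \<open>q\<close>, and on its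
  range \<open>a - a ^ (n + 1)\<close> does; so away from \<open>0\<close> and the \<open>n\<close>-th roots of unity both pieces of
  \<open>t - a\<close> are invertible.\<close>

lemma invertible_el_resolvent_from_idempotent:
  fixes a p q :: "'a::complex_banach_algebra_1"
  assumes S: "\<And>s s'. s \<in> S \<Longrightarrow> s' \<in> S \<Longrightarrow> s * s' = s' * s"
    and mem: "a \<in> bicommutant S" "p \<in> bicommutant S" "q \<in> bicommutant S"
    and p: "p * p = p" and nil: "quasinilpotent q"
    and kernel: "q * (1 - p) = a * (1 - p)" and range: "q * p = a * p - a ^ Suc n * p"
    and t: "t \<noteq> 0" "t ^ n \<noteq> 1"
  shows "invertible_el (scaleC t 1 - a)"
proof -
  define G where "G = scaleC (t ^ n) (\<Sum>l<Suc n. (scaleC (inverse t) a) ^ l)"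
  have "t - t ^ Suc n = t * (1 - t ^ n)"
    by (simp add: right_diff_distrib)
  with t have "t - t ^ Suc n \<noteq> 0"
    by simp
  with t nil have "t \<notin> spectrum q" "t - t ^ Suc n \<notin> spectrum q"
    by (simp_all add: quasinilpotent_def)
  then have inv: "invertible_el (scaleC t 1 - q)" "invertible_el (scaleC (t - t ^ Suc n) 1 - q)"
    by (simp_all add: spectrum_def)
  from kernel have kernel': "(scaleC t 1 - a) * (1 - p) = (scaleC t 1 - q) * (1 - p)"
    by (simp add: left_diff_distrib)
  have "(scaleC (t - t ^ Suc n) 1 - q) * p
      = (scaleC t 1 - a) * p - (scaleC (t ^ Suc n) 1 - a ^ Suc n) * p"
    using range by (simp add: left_diff_distrib scaleC_diff_left)
  also have "scaleC (t ^ Suc n) 1 - a ^ Suc n = (scaleC t 1 - a) * G"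
    unfolding G_def by (rule resolvent_mult_sum_powers[OF t(1), symmetric])
  also have "(scaleC t 1 - a) * p - (scaleC t 1 - a) * G * p = (scaleC t 1 - a) * (1 - G) * p"
    by (simp add: right_diff_distrib left_diff_distrib)
  finally have range': "(scaleC t 1 - a) * (1 - G) * p = (scaleC (t - t ^ Suc n) 1 - q) * p"
    by simp
  show ?thesis
    using invertible_el_from_idempotent_pieces[where S = S, OF S _ mem(2) _ _ _ p inv kernel' range'] mem
    by (simp add: G_def)
qed

lemma spectrum_subset_roots_of_unity:
  fixes a x :: "'a::complex_banach_algebra_1"
  assumes xax: "x * a * x = x" and ax: "a * x = x * a"
    and nil: "quasinilpotent (a - a ^ (n + 2) * x)"
  shows "spectrum a \<subseteq> insert 0 {t. t ^ n = 1}"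
proof
  fix t assume t: "t \<in> spectrum a"
  define S where "S = {a, x}"
  have S: "\<And>s s'. s \<in> S \<Longrightarrow> s' \<in> S \<Longrightarrow> s * s' = s' * s"
    using ax by (auto simp: S_def)
  have [simp]: "a \<in> bicommutant S" "x \<in> bicommutant S"
    by (simp_all add: S_def bicommutant_base)
  define p where "p = a * x"
  define q where "q = a - a ^ (n + 2) * x"
  have "p * p = a * (x * a * x)"
    by (simp add: p_def mult.assoc)
  then have p: "p * p = p"
    by (simp add: xax p_def)
  have "x * (1 - p) = 0"
    using xax by (simp add: p_def right_diff_distrib mult.assoc)
  then have kernel: "q * (1 - p) = a * (1 - p)"
    by (simp add: q_def left_diff_distrib mult.assoc)
  have "a ^ (n + 2) = a ^ Suc n * a"
    by (simp only: add_2_eq_Suc' power_Suc2)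
  then have "a ^ (n + 2) * x * p = a ^ Suc n * (a * x * p)"
    by (simp add: mult.assoc)
  then have range: "q * p = a * p - a ^ Suc n * p"
    using p by (simp add: q_def left_diff_distrib flip: p_def)
  show "t \<in> insert 0 {t. t ^ n = 1}"
    using invertible_el_resolvent_from_idempotent[where S = S, OF S _ _ _ p _ kernel range] nil t
    by (auto simp: p_def q_def spectrum_def)
qed

lemma inner_inverse_from_idempotent:
  fixes a p :: "'a::complex_banach_algebra_1"
  assumes n: "n > 0" and p: "p \<in> bicommutant {a}" "p * p = p"
    and nil: "topologically_nilpotent (a ^ n - p)"
  obtains x where "x \<in> bicommutant {a}" "a * x = p" "x * p = x"
proof -
  have commute: "y * w = w * y" if "y \<in> bicommutant {a}" "w \<in> bicommutant {a}" for y w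
    using bicommutant_commute[of "{a}"] that by blast
  have [simp]: "a \<in> bicommutant {a}"
    by (simp add: bicommutant_base)
  define c where "c = a ^ n"
  define w where "w = 1 + (c - p)"
  have "topologically_nilpotent ((c - p) * - 1)"
    using nil by (intro topologically_nilpotent_mult) (simp_all add: c_def)
  then have "invertible_el (1 - (c - p) * - 1)"
    by (rule invertible_el_one_diff_topologically_nilpotent)
  then have w: "invertible_el w"
    by (simp add: w_def algebra_simps)
  define x where "x = a ^ (n - 1) * inverse_el w * p"
  have [simp]: "c \<in> bicommutant {a}" "w \<in> bicommutant {a}" "x \<in> bicommutant {a}"
    using p w by (simp_all add: c_def w_def x_def)
  have "c * p = w * p"
    using p by (simp add: w_def algebra_simps)
  then have "inverse_el w * (c * p) = p"
    using w by (simp flip: mult.assoc)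
  moreover have "a * x = inverse_el w * (c * p)"
    using n commute[of c "inverse_el w"] w
    by (simp add: x_def c_def mult.assoc power_Suc[symmetric] flip: mult.assoc[of a])
      (simp flip: mult.assoc)
  moreover have "x * p = x"
    using p by (simp add: x_def mult.assoc)
  ultimately show ?thesis
    using that[of x] by simp
qed

lemma quasinilpotent_diff_power_mult_idempotent:
  fixes a p :: "'a::complex_banach_algebra_1"
  assumes n: "n > 0" and p: "p \<in> bicommutant {a}" "p * p = p"
    and nil: "topologically_nilpotent (a ^ n - p)"
  shows "quasinilpotent (a - a ^ Suc n * p)"
proof -
  have commute: "y * w = w * y" if "y \<in> bicommutant {a}" "w \<in> bicommutant {a}" for y w
    using bicommutant_commute[of "{a}"] that by blast
  have [simp]: "a \<in> bicommutant {a}"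
    by (simp add: bicommutant_base)
  define c where "c = a ^ n"
  define r where "r = 1 - c * p"
  have [simp]: "c \<in> bicommutant {a}" "r \<in> bicommutant {a}"
    using p by (simp_all add: c_def r_def)
  have q: "a - a ^ Suc n * p = a * r"
    by (simp add: c_def r_def right_diff_distrib mult.assoc)
  have "p * (c * p) = c * p * p"
    using commute[of p c] p by (simp flip: mult.assoc)
  also have "\<dots> = c * p"
    using p by (simp add: mult.assoc)
  finally have pr: "p * r = - ((c - p) * p)"
    using p by (simp add: r_def right_diff_distrib left_diff_distrib)
  define K where "K = r ^ n - p * r ^ (n - 1)"
  have "(a * r) ^ n = c * r ^ n"
    unfolding c_def by (rule power_mult_distrib_commuting) (rule commute; simp)
  also have "\<dots> = (c - p) * r ^ n + p * r * r ^ (n - 1)"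
    using n by (simp add: algebra_simps mult.assoc flip: power_Suc)
  also have "\<dots> = (c - p) * K"
    unfolding pr by (simp add: K_def right_diff_distrib mult.assoc)
  finally have "topologically_nilpotent ((a * r) ^ n)"
    using topologically_nilpotent_mult[OF nil[folded c_def], of K] commute[of "c - p" K] p
    by (simp add: K_def)
  then show ?thesis
    unfolding q using n quasinilpotent_of_power quasinilpotent_iff_topologically_nilpotent by blast
qed

lemma gpi_Hirano_invertibleI_idempotent:
  fixes a p :: "'a::complex_banach_algebra_1"
  assumes n: "n > 0" and p: "p \<in> bicommutant {a}" "p * p = p"
    and nil: "topologically_nilpotent (a ^ n - p)"
  shows "gpi_Hirano_invertible a"
proof -
  obtain x where x: "x \<in> bicommutant {a}" and ax: "a * x = p" and xp: "x * p = x"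
    using inner_inverse_from_idempotent[OF assms] by blast
  have commute: "a * x = x * a" "p * x = x * p"
    using bicommutant_commute[of "{a}"] x p by (auto simp: bicommutant_base)
  have xax: "x * a * x = x"
    using ax xp commute by simp
  have "a ^ (n + 2) = a ^ Suc n * a"
    by (simp only: add_2_eq_Suc' power_Suc2)
  then have "a ^ (n + 2) * x = a ^ Suc n * p"
    using ax by (simp add: mult.assoc)
  then have "quasinilpotent (a - a ^ (n + 2) * x)"
    using quasinilpotent_diff_power_mult_idempotent[OF assms] by simp
  then show ?thesis
    unfolding gpi_Hirano_invertible_def using xax commute(1) n by blast
qed

lemma gpi_Hirano_invertible_iff_spectrum:
  fixes a :: "'a::complex_banach_algebra_1"
  shows "gpi_Hirano_invertible a \<longleftrightarrow> (\<exists>n>0. spectrum a \<subseteq> insert 0 {t. t ^ n = 1})"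
proof
  assume "gpi_Hirano_invertible a"
  then show "\<exists>n>0. spectrum a \<subseteq> insert 0 {t. t ^ n = 1}"
    unfolding gpi_Hirano_invertible_def using spectrum_subset_roots_of_unity by blast
next
  assume "\<exists>n>0. spectrum a \<subseteq> insert 0 {t. t ^ n = 1}"
  then obtain n where n: "n > 0" and spectrum: "spectrum a \<subseteq> insert 0 {t. t ^ n = 1}"
    by blast
  define c where "c = a ^ n"
  have "spectrum c \<subseteq> {0, 1}"
    using spectrum_power[OF n, of a] spectrum n by (auto simp: c_def zero_power)
  then have "(\<lambda>c. c - c * c) ` spectrum c \<subseteq> {0}"
    by auto
  then have "spectrum (c - c * c) \<subseteq> {0}"
    using spectrum_diff_square_subset[of c] by blast
  then have "topologically_nilpotent (c - c * c)"
    by (rule topologically_nilpotentI)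
  moreover have "c \<in> bicommutant {a}"
    by (simp add: c_def bicommutant_base)
  ultimately obtain p where "p \<in> bicommutant {a}" "p * p = p" "topologically_nilpotent (c - p)"
    using idempotent_lifting[where S = "{a}"] by blast
  then show "gpi_Hirano_invertible a"
    using gpi_Hirano_invertibleI_idempotent[OF n] by (simp add: c_def)
qed

section \<open>Sums \<open>a + b\<close> with \<open>a * b = 0\<close>\<close>

lemma resolvent_mult_resolvent_of_mult_eq_0:
  fixes a b :: "'a::complex_banach_algebra_1"
  assumes "a * b = 0"
  shows "(scaleC t 1 - a) * (scaleC t 1 - b) = scaleC t (scaleC t 1 - (a + b))"
  using assms by (simp add: left_diff_distrib right_diff_distrib scaleC_diff_right
      scaleC_add_right scaleC_scaleC algebra_simps)

lemma spectrum_add_subset_of_mult_eq_0: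
  fixes a b :: "'a::complex_banach_algebra_1"
  assumes "a * b = 0"
  shows "spectrum (a + b) \<subseteq> insert 0 (spectrum a \<union> spectrum b)"
proof
  fix t assume t: "t \<in> spectrum (a + b)"
  show "t \<in> insert 0 (spectrum a \<union> spectrum b)"
  proof (rule ccontr)
    assume "t \<notin> insert 0 (spectrum a \<union> spectrum b)"
    then have "t \<noteq> 0" "invertible_el ((scaleC t 1 - a) * (scaleC t 1 - b))"
      by (auto simp: spectrum_def intro: invertible_el_mult)
    with t show False
      by (simp add: resolvent_mult_resolvent_of_mult_eq_0[OF assms] invertible_el_scaleC_iff
          spectrum_def)
  qed
qed

lemma spectra_subset_of_spectrum_add_subset:
  fixes a b :: "'a::complex_banach_algebra_1"
  assumes ab: "a * b = 0" and F: "finite F" "0 \<in> F" "spectrum (a + b) \<subseteq> F"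
  shows "spectrum a \<subseteq> F \<and> spectrum b \<subseteq> F"
proof -
  define \<Omega> where "\<Omega> = - F"
  have "connected \<Omega>"
    unfolding \<Omega>_def Compl_eq_Diff_UNIV
    using F by (intro connected_open_diff_countable) (auto simp: countable_finite)
  have t0: "t \<noteq> 0" if "t \<in> \<Omega>" for t
    using that F by (auto simp: \<Omega>_def)
  define R where "R t = scaleC (inverse t) 1 * inverse_el (scaleC t 1 - (a + b))" for t
  have cont_R: "continuous_on \<Omega> R"
    unfolding R_def using F t0
    by (intro continuous_intros continuous_on_resolvent) (auto simp: \<Omega>_def)
  have inv: "invertible_el (scaleC t 1 - (a + b))" if "t \<in> \<Omega>" for t
    using that F by (auto simp: \<Omega>_def spectrum_def)
  have right: "(scaleC t 1 - a) * ((scaleC t 1 - b) * R t) = 1"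
    and left: "(R t * (scaleC t 1 - a)) * (scaleC t 1 - b) = 1" if "t \<in> \<Omega>" for t
    using inv[OF that] t0[OF that]
    by (simp_all add: R_def mult.assoc resolvent_mult_resolvent_of_mult_eq_0[OF ab]
        mult_scaleC_left mult_scaleC_right scaleC_scaleC scaleC_one flip: mult.assoc[of "scaleC t 1 - a"])
  have "bounded (F \<union> spectrum a \<union> spectrum b)"
    using F(1) by (simp add: finite_imp_bounded bounded_spectrum)
  then have "F \<union> spectrum a \<union> spectrum b \<noteq> UNIV"
    using not_bounded_UNIV by metis
  then obtain t1 where "t1 \<notin> F \<union> spectrum a \<union> spectrum b"
    by blast
  then have t1: "t1 \<in> \<Omega>" "t1 \<notin> spectrum a" "t1 \<notin> spectrum b"
    by (simp_all add: \<Omega>_def)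
  have "invertible_el (scaleC t 1 - a)" "invertible_el (scaleC t 1 - b)" if "t \<in> \<Omega>" for t
  proof -
    show "invertible_el (scaleC t 1 - a)"
      by (rule connected_one_sided_invertible_el[OF \<open>connected \<Omega>\<close>, of _ "\<lambda>t. (scaleC t 1 - b) * R t"])
        (use right t1 that cont_R in \<open>auto simp: spectrum_def intro!: continuous_intros\<close>)
    show "invertible_el (scaleC t 1 - b)"
      by (rule connected_one_sided_invertible_el[OF \<open>connected \<Omega>\<close>, of _ "\<lambda>t. R t * (scaleC t 1 - a)"])
        (use left t1 that cont_R in \<open>auto simp: spectrum_def intro!: continuous_intros\<close>)
  qed
  then show ?thesis
    by (auto simp: \<Omega>_def spectrum_def)
qed

theorem corollary3p3:
  fixes a b :: "'a::complex_banach_algebra_1"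
  assumes "a * b = 0"
  shows "(gpi_Hirano_invertible a \<and> gpi_Hirano_invertible b) \<longleftrightarrow> gpi_Hirano_invertible (a + b)"
proof
  assume "gpi_Hirano_invertible a \<and> gpi_Hirano_invertible b"
  then obtain n1 n2 where n: "n1 > 0" "n2 > 0"
    and spectra: "spectrum a \<subseteq> insert 0 {t. t ^ n1 = 1}" "spectrum b \<subseteq> insert 0 {t. t ^ n2 = 1}"
    by (auto simp: gpi_Hirano_invertible_iff_spectrum)
  have "t ^ (n1 * n2) = 1" if "t ^ n1 = 1 \<or> t ^ n2 = 1" for t :: complex
    using that power_mult[of t n1 n2] power_mult[of t n2 n1] by (auto simp: mult.commute)
  then have "spectrum (a + b) \<subseteq> insert 0 {t. t ^ (n1 * n2) = 1}"
    using spectrum_add_subset_of_mult_eq_0[OF assms] spectra by blast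
  with n show "gpi_Hirano_invertible (a + b)"
    by (auto simp: gpi_Hirano_invertible_iff_spectrum intro!: exI[of _ "n1 * n2"])
next
  assume "gpi_Hirano_invertible (a + b)"
  then obtain n where n: "n > 0" and "spectrum (a + b) \<subseteq> insert 0 {t. t ^ n = 1}"
    by (auto simp: gpi_Hirano_invertible_iff_spectrum)
  moreover have "finite (insert 0 {t :: complex. t ^ n = 1})"
    using n by (simp add: finite_roots_unity)
  ultimately have "spectrum a \<subseteq> insert 0 {t. t ^ n = 1} \<and> spectrum b \<subseteq> insert 0 {t. t ^ n = 1}"
    using spectra_subset_of_spectrum_add_subset[OF assms] by blast
  with n show "gpi_Hirano_invertible a \<and> gpi_Hirano_invertible b"
    by (auto simp: gpi_Hirano_invertible_iff_spectrum)
qed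

end
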